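(* Let $\varphi\in\Xi_p$ be such that $\lim_{x\to0}\frac{\sqrt x}{\varphi(x)}=0$. Then for every $n\in\mathbb{N}$ the map \[ \Upsilon_n:\big(C_0([0,1],G(\mathbb{R}^d)),d_\infty\big)\to\big(C_0([0,1],G(\mathbb{R}^d)),d_\varphi\big) \] is continuous.
   Context: Fix $d\geq2$, $p\in(2,3)$. $G(\mathbb{R}^d)$ is the set of $g=(g^1,g^2)\in\mathbb{R}^d\oplus(\mathbb{R}^d\otimes\mathbb{R}^d)$ whose symmetric part of $g^2$ is $\frac12g^1\otimes g^1$, with product $g\otimes h=(g^1+h^1,g^2+g^1\otimes h^1+h^2)$, identity $(0,0)=:\exp(0)$, inverse $(g^1,g^2)^{-1}=(-g^1,-g^2+g^1\otimes g^1)$; $\exp(a^1,a^2)=(a^1,a^2+\frac12a^1\otimes a^1)$ for antisymmetric $a^2$, $\exp(x):=\exp(x,0)$; dilation $\delta_\lambda\exp(a^1,a^2)=\exp(\lambda a^1,\lambda^2a^2)$; $\|g\|=\inf\{\sum_i|x^i|:x^i\in\mathbb{R}^d,\exp(x^1)\otimes\cdots\otimes\exp(x^k)=g\}$. $C_0([0,1],G(\mathbb{R}^d))$: continuous paths with $\mathbf{x}_0=\exp(0)$; $\mathbf{x}_{s,t}=\mathbf{x}_s^{-1}\otimes\mathbf{x}_t$; $d_\infty(\mathbf{x},\mathbf{y})=\sup_{0\leq s<t\leq1}\|\mathbf{x}_{s,t}^{-1}\otimes\mathbf{y}_{s,t}\|$ and $d_\varphi(\mathbf{x},\mathbf{y})=\sup_{0\leq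 s<t\leq1}\|\mathbf{x}_{s,t}^{-1}\otimes\mathbf{y}_{s,t}\|/\varphi(t-s)$. $\Xi_p$: $\varphi:[0,1]\to[0,\infty)$ with $\varphi(0)=0$ and $\varphi^p$ strictly increasing and convex. $\Upsilon_n(\mathbf{x})$ is the path with $\Upsilon_n(\mathbf{x})_{k/2^n}=\mathbf{x}_{k/2^n}$ for $k=0,\dots,2^n$ and $\Upsilon_n(\mathbf{x})_{k/2^n,\,k/2^n+t}=\delta_{2^nt}(\mathbf{x}_{k/2^n,(k+1)/2^n})$ for $t\in[0,2^{-n}]$, $k=0,\dots,2^n-1$. *)

theory Defs
  imports "HOL-Analysis.Analysis" "HOL-Library.Extended_Real"
begin

type_synonym 'd grp = "(real^'d) \<times> (real^'d^'d)"

definition outer :: "real^'d \<Rightarrow> real^'d \<Rightarrow> real^'d^'d" where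
  "outer x y = (\<chi> i j. x$i * y$j)"

definition Gset :: "'d::finite grp set" where
  "Gset = {g. (\<chi> i j. (snd g $i$j + snd g $j$i) / 2) = (1/2) *\<^sub>R outer (fst g) (fst g)}"

definition gmul :: "'d::finite grp \<Rightarrow> 'd grp \<Rightarrow> 'd grp" where
  "gmul g h = (fst g + fst h, snd g + outer (fst g) (fst h) + snd h)"

definition gone :: "'d::finite grp" where
  "gone = (0, 0)"

definition ginv :: "'d::finite grp \<Rightarrow> 'd grp" where
  "ginv g = (- fst g, - snd g + outer (fst g) (fst g))"

definition gexp2 :: "real^'d \<Rightarrow> real^'d^'d \<Rightarrow> 'd::finite grp" where
  "gexp2 a1 a2 = (a1, a2 + (1/2) *\<^sub>R outer a1 a1)"

definition gexp :: "real^'d \<Rightarrow> 'd::finite grp" where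
  "gexp x = gexp2 x 0"

text \<open>Dilation: delta_lambda exp(a1,a2) = exp(lambda a1, lambda^2 a2); on g = exp(a1,a2) this
  is (lambda g1, lambda^2 g2).\<close>
definition dil :: "real \<Rightarrow> 'd::finite grp \<Rightarrow> 'd grp" where
  "dil r g = (r *\<^sub>R fst g, r\<^sup>2 *\<^sub>R snd g)"

definition ccnorm :: "'d::finite grp \<Rightarrow> real" where
  "ccnorm g = Inf {sum_list (map norm xs) | xs.
                    foldr (\<lambda>x acc. gmul (gexp x) acc) xs gone = g}"

definition C0paths :: "(real \<Rightarrow> 'd::finite grp) set" where
  "C0paths = {x. continuous_on {0..1} x \<and> (\<forall>t\<in>{0..1}. x t \<in> Gset) \<and> x 0 = gone}"

definition incr :: "(real \<Rightarrow> 'd::finite grp) \<Rightarrow> real \<Rightarrow> real \<Rightarrow> 'd grp" where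
  "incr x s t = gmul (ginv (x s)) (x t)"

definition d_inf :: "(real \<Rightarrow> 'd::finite grp) \<Rightarrow> (real \<Rightarrow> 'd grp) \<Rightarrow> ereal" where
  "d_inf x y = (SUP st \<in> {(s,t). 0 \<le> s \<and> s < t \<and> t \<le> 1}.
      ereal (ccnorm (gmul (ginv (incr x (fst st) (snd st))) (incr y (fst st) (snd st)))))"

definition d_phi :: "(real \<Rightarrow> real) \<Rightarrow> (real \<Rightarrow> 'd::finite grp) \<Rightarrow> (real \<Rightarrow> 'd grp) \<Rightarrow> ereal" where
  "d_phi \<phi> x y = (SUP st \<in> {(s,t). 0 \<le> s \<and> s < t \<and> t \<le> 1}.
      ereal (ccnorm (gmul (ginv (incr x (fst st) (snd st))) (incr y (fst st) (snd st)))
             / \<phi> (snd st - fst st)))"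

definition Xi :: "real \<Rightarrow> (real \<Rightarrow> real) set" where
  "Xi p = {\<phi>. (\<forall>x\<in>{0..1}. \<phi> x \<ge> 0) \<and> \<phi> 0 = 0 \<and>
              strict_mono_on {0..1} (\<lambda>x. \<phi> x powr p) \<and>
              convex_on {0..1} (\<lambda>x. \<phi> x powr p)}"

definition Ups :: "nat \<Rightarrow> (real \<Rightarrow> 'd::finite grp) \<Rightarrow> real \<Rightarrow> 'd grp" where
  "Ups n x t = (if 1 \<le> t then x 1 else
     (let k = real (nat \<lfloor>2^n * t\<rfloor>) in
       gmul (x (k / 2^n)) (dil (2^n * t - k) (incr x (k / 2^n) ((k + 1) / 2^n)))))"

end

theory Submission
  imports Defs
begin

text \<open>
  The path \<open>\<Upsilon>\<^sub>n x\<close> only depends on the values of \<open>x\<close> at the dyadic points \<open>k/2\<^sup>n\<close>, and on each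
  dyadic interval both of its levels are polynomials of degree at most two in \<open>t\<close> whose coefficients
  are built from these values. If \<open>d\<^sub>\<infinity>(x, y)\<close> is small, the dyadic values of \<open>x\<close> and \<open>y\<close> are
  \<open>e\<close>-close in coordinates, so the coordinates of \<open>\<Upsilon>\<^sub>n y - \<Upsilon>\<^sub>n x\<close> are \<open>O(e)\<close>-Lipschitz,
  while those of \<open>\<Upsilon>\<^sub>n x\<close> are Lipschitz. Hence, for \<open>h = t - s\<close>, both levels of the increment
  \<open>Z\<close> of \<open>\<Upsilon>\<^sub>n y\<close> relative to \<open>\<Upsilon>\<^sub>n x\<close> over \<open>[s, t]\<close> are \<open>O(e h)\<close>. Chow's construction
  (a horizontal segment followed by one commutator of two segments per entry of the antisymmetric
  part) bounds the Carnot-Caratheodory norm by the first level plus square roots of the second,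
  so \<open>\<parallel>Z\<parallel> = O(\<surd>(e h))\<close>. Finally, \<open>\<surd>h = o(\<phi> h)\<close> and the monotonicity of \<open>\<phi>\<close> give
  \<open>\<phi> h \<ge> c \<surd>h\<close> on \<open>(0, 1]\<close>, whence \<open>d\<^sub>\<phi>(\<Upsilon>\<^sub>n x, \<Upsilon>\<^sub>n y) = O(\<surd>e)\<close>.
\<close>

section \<open>The group and its Carnot-Caratheodory norm\<close>

lemma gmul_simps [simp]:
  "fst (gmul g h) = fst g + fst h"
  "snd (gmul g h) = snd g + outer (fst g) (fst h) + snd h"
  by (simp_all add: gmul_def)

lemma ginv_simps [simp]:
  "fst (ginv g) = - fst g"
  "snd (ginv g) = - snd g + outer (fst g) (fst g)"
  by (simp_all add: ginv_def)

lemma dil_simps [simp]: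
  "fst (dil r g) = r *\<^sub>R fst g"
  "snd (dil r g) = r\<^sup>2 *\<^sub>R snd g"
  by (simp_all add: dil_def)

lemma gexp_simps [simp]:
  "fst (gexp x) = x"
  "snd (gexp x) = (1/2) *\<^sub>R outer x x"
  by (simp_all add: gexp_def gexp2_def)

lemma gone_simps [simp]: "fst gone = 0" "snd gone = 0"
  by (simp_all add: gone_def)

lemma outer_nth [simp]: "outer x y $ i $ j = x $ i * y $ j"
  by (simp add: outer_def)

lemma outer_zero [simp]: "outer 0 x = 0" "outer x 0 = 0"
  by (simp_all add: vec_eq_iff)

lemma grp_eq_iff:
  "(g::'d::finite grp) = h \<longleftrightarrow>
     (\<forall>i. fst g $ i = fst h $ i) \<and> (\<forall>i j. snd g $ i $ j = snd h $ i $ j)"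
  by (metis prod_eq_iff vec_eq_iff)

lemma gmul_assoc: "gmul (gmul a b) c = gmul a (gmul b c)"
  by (simp add: grp_eq_iff algebra_simps)

lemma gmul_gone_left [simp]: "gmul gone g = g"
  by (simp add: grp_eq_iff)

lemma gmul_gone_right [simp]: "gmul g gone = g"
  by (simp add: grp_eq_iff)

lemma ginv_gone [simp]: "ginv gone = gone"
  by (simp add: grp_eq_iff)

lemma gmul_ginv_cancel_left: "gmul g (gmul (ginv g) h) = h"
  by (simp add: grp_eq_iff algebra_simps)

lemma dil_one [simp]: "dil 1 g = g"
  by (simp add: dil_def)

lemma dil_zero [simp]: "dil 0 g = gone"
  by (simp add: dil_def gone_def)

lemma Gset_iff:
  "g \<in> Gset \<longleftrightarrow> (\<forall>i j. snd g $ i $ j + snd g $ j $ i = fst g $ i * fst g $ j)"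
  unfolding Gset_def vec_eq_iff by simp (smt (verit))

lemma Gset_gmul: "g \<in> Gset \<Longrightarrow> h \<in> Gset \<Longrightarrow> gmul g h \<in> Gset"
  unfolding Gset_iff by (simp add: algebra_simps)

lemma Gset_ginv: "g \<in> Gset \<Longrightarrow> ginv g \<in> Gset"
  unfolding Gset_iff by (simp add: algebra_simps)

lemma Gset_dil: "g \<in> Gset \<Longrightarrow> dil r g \<in> Gset"
  unfolding Gset_iff by (simp add: power2_eq_square) (metis distrib_left mult.assoc mult.left_commute)

definition word_prod :: "(real^'d) list \<Rightarrow> 'd::finite grp" where
  "word_prod xs = foldr (\<lambda>x acc. gmul (gexp x) acc) xs gone"

lemma word_prod_Nil [simp]: "word_prod [] = gone"
  by (simp add: word_prod_def)

lemma word_prod_Cons [simp]: "word_prod (x # xs) = gmul (gexp x) (word_prod xs)"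
  by (simp add: word_prod_def)

lemma word_prod_append: "word_prod (xs @ ys) = gmul (word_prod xs) (word_prod ys)"
  by (induction xs) (simp_all add: gmul_assoc)

lemma word_prod_commutator: "word_prod [u, v, -u, -v] = (0, outer u v - outer v u)"
  by (simp add: grp_eq_iff algebra_simps)

lemma ccnorm_eq_Inf_word_prod:
  "ccnorm g = Inf {sum_list (map norm xs) | xs. word_prod xs = g}"
  unfolding ccnorm_def word_prod_def ..

lemma sum_list_norm_nonneg: "0 \<le> sum_list (map norm xs)"
  by (induction xs) auto

lemma ccnorm_le_word_length: "word_prod xs = g \<Longrightarrow> ccnorm g \<le> sum_list (map norm xs)"
  unfolding ccnorm_eq_Inf_word_prod
  by (rule cInf_lower) (auto intro!: bdd_belowI[where m=0] sum_list_norm_nonneg)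

lemma word_prod_bounds:
  fixes xs :: "(real^'d::finite) list"
  defines "L \<equiv> sum_list (map norm xs)"
  shows "norm (fst (word_prod xs)) \<le> L \<and> (\<forall>i j. \<bar>snd (word_prod xs) $ i $ j\<bar> \<le> L\<^sup>2)"
  unfolding L_def
proof (induction xs)
  case (Cons x xs)
  define L where "L = sum_list (map norm xs)"
  have L0: "0 \<le> L"
    unfolding L_def by (rule sum_list_norm_nonneg)
  have fst_le: "norm (fst (word_prod xs)) \<le> L" and snd_le: "\<And>i j. \<bar>snd (word_prod xs) $ i $ j\<bar> \<le> L\<^sup>2"
    using Cons unfolding L_def by auto
  have "\<bar>snd (word_prod (x # xs)) $ i $ j\<bar> \<le> (norm x + L)\<^sup>2" for i j
  proof -
    have comp: "\<bar>x $ i\<bar> \<le> norm x" "\<bar>x $ j\<bar> \<le> norm x" "\<bar>fst (word_prod xs) $ j\<bar> \<le> L"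
      using component_le_norm_cart fst_le order_trans by blast+
    have "\<bar>snd (word_prod (x # xs)) $ i $ j\<bar>
        = \<bar>x $ i * x $ j / 2 + x $ i * fst (word_prod xs) $ j + snd (word_prod xs) $ i $ j\<bar>"
      by simp
    also have "\<dots> \<le> \<bar>x $ i * x $ j / 2\<bar> + \<bar>x $ i * fst (word_prod xs) $ j\<bar> + \<bar>snd (word_prod xs) $ i $ j\<bar>"
      by linarith
    also have "\<dots> \<le> \<bar>x $ i\<bar> * \<bar>x $ j\<bar> / 2 + \<bar>x $ i\<bar> * \<bar>fst (word_prod xs) $ j\<bar> + L\<^sup>2"
      using snd_le[of i j] by (simp add: abs_mult)
    also have "\<dots> \<le> norm x * norm x / 2 + norm x * L + L\<^sup>2"
      using comp by (intro add_mono mult_mono divide_right_mono) auto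
    also have "\<dots> \<le> (norm x + L)\<^sup>2"
      using L0 by (simp add: power2_eq_square algebra_simps)
    finally show ?thesis .
  qed
  moreover have "norm (fst (word_prod (x # xs))) \<le> norm x + L"
    using fst_le norm_triangle_ineq[of x "fst (word_prod xs)"] by simp
  ultimately show ?case
    unfolding L_def by simp
qed simp

definition elem_antisym :: "'d::finite \<Rightarrow> 'd \<Rightarrow> real^'d^'d" where
  "elem_antisym i j = outer (axis i 1) (axis j 1) - outer (axis j 1) (axis i 1)"

lemma antisym_eq_sum_elem_antisym:
  fixes A :: "real^'d::finite^'d"
  assumes "\<And>i j. A $ i $ j + A $ j $ i = 0"
  shows "A = (\<Sum>p\<in>UNIV. (A $ fst p $ snd p / 2) *\<^sub>R elem_antisym (fst p) (snd p))"
proof -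
  have term_nth: "((A $ fst p $ snd p / 2) *\<^sub>R elem_antisym (fst p) (snd p)) $ k $ l
      = (if p = (k, l) then A $ k $ l / 2 else 0) - (if p = (l, k) then A $ l $ k / 2 else 0)"
    for p :: "'d \<times> 'd" and k l
  proof -
    obtain i j where p: "p = (i, j)"
      by fastforce
    have "((A $ fst p $ snd p / 2) *\<^sub>R elem_antisym (fst p) (snd p)) $ k $ l
        = A $ i $ j / 2 * ((if k = i then 1 else 0) * (if l = j then 1 else 0)
                           - (if k = j then 1 else 0) * (if l = i then 1 else 0))"
      unfolding p by (simp add: elem_antisym_def axis_def)
    also have "\<dots> = (if p = (k, l) then A $ k $ l / 2 else 0) - (if p = (l, k) then A $ l $ k / 2 else 0)"
      unfolding p by (cases "i = k"; cases "j = l"; cases "j = k"; cases "i = l") simp_all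
    finally show ?thesis .
  qed
  have "(\<Sum>p\<in>UNIV. (A $ fst p $ snd p / 2) *\<^sub>R elem_antisym (fst p) (snd p)) $ k $ l = A $ k $ l"
    for k l
  proof -
    have "(\<Sum>p\<in>UNIV. (A $ fst p $ snd p / 2) *\<^sub>R elem_antisym (fst p) (snd p)) $ k $ l
        = (\<Sum>p\<in>UNIV. (if p = (k, l) then A $ k $ l / 2 else 0) - (if p = (l, k) then A $ l $ k / 2 else 0))"
      by (simp only: sum_component term_nth)
    also have "\<dots> = A $ k $ l"
      using assms[of k l] by (simp add: sum_subtractf)
    finally show ?thesis .
  qed
  then show ?thesis
    by (simp add: vec_eq_iff)
qed

lemma central_word_exists:
  fixes c :: "'d::finite \<times> 'd \<Rightarrow> real"
  assumes "finite S"
  shows "\<exists>xs. word_prod xs = (0, \<Sum>p\<in>S. c p *\<^sub>R elem_antisym (fst p) (snd p))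
           \<and> sum_list (map norm xs) \<le> (\<Sum>p\<in>S. 4 * sqrt \<bar>c p\<bar>)"
  using assms
proof (induction S rule: finite_induct)
  case empty
  show ?case
    by (intro exI[of _ "[]"]) (simp add: gone_def)
next
  case (insert p S)
  then obtain xs where xs: "word_prod xs = (0, \<Sum>p\<in>S. c p *\<^sub>R elem_antisym (fst p) (snd p))"
      "sum_list (map norm xs) \<le> (\<Sum>p\<in>S. 4 * sqrt \<bar>c p\<bar>)"
    by blast
  define a where "a = sgn (c p) * sqrt \<bar>c p\<bar>"
  define b where "b = sqrt \<bar>c p\<bar>"
  define u :: "real^'d" where "u = a *\<^sub>R axis (fst p) 1"
  define v :: "real^'d" where "v = b *\<^sub>R axis (snd p) 1"
  have "a * b = c p"
    unfolding a_def b_def by (simp add: mult.assoc sgn_mult_abs)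
  then have commutator: "outer u v - outer v u = c p *\<^sub>R elem_antisym (fst p) (snd p)"
    unfolding u_def v_def elem_antisym_def by (simp add: vec_eq_iff algebra_simps flip: \<open>a * b = c p\<close>)
  have norms: "norm u = sqrt \<bar>c p\<bar>" "norm v = sqrt \<bar>c p\<bar>"
    unfolding u_def v_def a_def b_def by (auto simp: abs_mult sgn_if)
  show ?case
  proof (intro exI[of _ "[u, v, -u, -v] @ xs"] conjI)
    show "word_prod ([u, v, -u, -v] @ xs) = (0, \<Sum>p\<in>insert p S. c p *\<^sub>R elem_antisym (fst p) (snd p))"
      using insert(1,2)
      by (simp only: word_prod_append word_prod_commutator xs(1)) (simp add: gmul_def commutator)
    show "sum_list (map norm ([u, v, -u, -v] @ xs)) \<le> (\<Sum>p\<in>insert p S. 4 * sqrt \<bar>c p\<bar>)"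
      using insert(1,2) xs(2) norms by simp
  qed
qed

lemma Gset_word_exists:
  assumes "g \<in> Gset"
  shows "\<exists>xs. word_prod xs = g \<and> sum_list (map norm xs) \<le> norm (fst g)
           + (\<Sum>p\<in>UNIV. 4 * sqrt \<bar>(snd g $ fst p $ snd p - fst g $ fst p * fst g $ snd p / 2) / 2\<bar>)"
proof -
  define A where "A = snd g - (1/2) *\<^sub>R outer (fst g) (fst g)"
  have "A $ i $ j + A $ j $ i = 0" for i j
    using assms unfolding Gset_iff A_def by (simp add: algebra_simps)
  note A_eq = antisym_eq_sum_elem_antisym[OF this]
  obtain xs where xs: "word_prod xs = (0, \<Sum>p\<in>UNIV. (A $ fst p $ snd p / 2) *\<^sub>R elem_antisym (fst p) (snd p))"
      "sum_list (map norm xs) \<le> (\<Sum>p\<in>UNIV. 4 * sqrt \<bar>A $ fst p $ snd p / 2\<bar>)"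
    using central_word_exists[of UNIV "\<lambda>p. A $ fst p $ snd p / 2"] by auto
  have "snd (word_prod xs) = A"
    using xs(1) A_eq by simp
  then have "word_prod (fst g # xs) = g"
    using xs(1) by (simp add: prod_eq_iff A_def)
  moreover have "sum_list (map norm (fst g # xs)) \<le> norm (fst g)
      + (\<Sum>p\<in>UNIV. 4 * sqrt \<bar>(snd g $ fst p $ snd p - fst g $ fst p * fst g $ snd p / 2) / 2\<bar>)"
    using xs(2) by (simp add: A_def)
  ultimately show ?thesis
    by blast
qed

lemma ccnorm_coord_bounds:
  assumes "g \<in> Gset"
  shows "\<bar>fst g $ i\<bar> \<le> ccnorm g" and "\<bar>snd g $ i $ j\<bar> \<le> (ccnorm g)\<^sup>2"
proof -
  let ?lengths = "{sum_list (map norm xs) | xs. word_prod xs = g}"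
  have nonempty: "?lengths \<noteq> {}"
    using Gset_word_exists[OF assms] by blast
  have "\<bar>fst g $ i\<bar> \<le> l \<and> sqrt \<bar>snd g $ i $ j\<bar> \<le> l" if "l \<in> ?lengths" for l
  proof -
    obtain xs where xs: "word_prod xs = g" "l = sum_list (map norm xs)"
      using \<open>l \<in> ?lengths\<close> by blast
    then have "0 \<le> l"
      by (simp add: sum_list_norm_nonneg)
    with xs word_prod_bounds[of xs] show ?thesis
      by (auto intro: order_trans[OF component_le_norm_cart] real_le_lsqrt)
  qed
  then have "\<bar>fst g $ i\<bar> \<le> ccnorm g" "sqrt \<bar>snd g $ i $ j\<bar> \<le> ccnorm g"
    unfolding ccnorm_eq_Inf_word_prod using nonempty by (auto intro: cInf_greatest)
  then show "\<bar>fst g $ i\<bar> \<le> ccnorm g" "\<bar>snd g $ i $ j\<bar> \<le> (ccnorm g)\<^sup>2"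
    using power_mono[of "sqrt \<bar>snd g $ i $ j\<bar>" "ccnorm g" 2] by auto
qed

lemma ccnorm_le_of_coord_bounds:
  fixes g :: "'d::finite grp" and a b :: real
  assumes "g \<in> Gset" and fst_le: "\<And>i. \<bar>fst g $ i\<bar> \<le> a" and snd_le: "\<And>i j. \<bar>snd g $ i $ j\<bar> \<le> b"
  shows "ccnorm g \<le> CARD('d) * a + 4 * (real CARD('d))\<^sup>2 * sqrt (b + a\<^sup>2)"
proof -
  have a0: "0 \<le> a"
    using fst_le abs_ge_zero order_trans by blast
  have "norm (fst g) \<le> (\<Sum>i\<in>UNIV. \<bar>fst g $ i\<bar>)"
    by (rule norm_le_l1_cart)
  also have "\<dots> \<le> CARD('d) * a"
    using sum_bounded_above[of UNIV "\<lambda>i. \<bar>fst g $ i\<bar>" a] fst_le by simp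
  finally have fst_norm: "norm (fst g) \<le> CARD('d) * a" .
  have "4 * sqrt \<bar>(snd g $ i $ j - fst g $ i * fst g $ j / 2) / 2\<bar> \<le> 4 * sqrt (b + a\<^sup>2)" for i j
  proof -
    have "\<bar>fst g $ i * fst g $ j\<bar> \<le> a * a"
      unfolding abs_mult using fst_le a0 by (intro mult_mono) auto
    then have "\<bar>(snd g $ i $ j - fst g $ i * fst g $ j / 2) / 2\<bar> \<le> b + a\<^sup>2"
      using snd_le[of i j] a0 by (simp add: abs_le_iff power2_eq_square)
    then show ?thesis
      by simp
  qed
  then have "(\<Sum>p\<in>UNIV. 4 * sqrt \<bar>(snd g $ fst p $ snd p - fst g $ fst p * fst g $ snd p / 2) / 2\<bar>)
      \<le> card (UNIV :: ('d \<times> 'd) set) * (4 * sqrt (b + a\<^sup>2))"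
    by (intro sum_bounded_above) auto
  also have "card (UNIV :: ('d \<times> 'd) set) = CARD('d)\<^sup>2"
    by (simp only: UNIV_Times_UNIV[symmetric] card_cartesian_product power2_eq_square)
  finally have "(\<Sum>p\<in>UNIV. 4 * sqrt \<bar>(snd g $ fst p $ snd p - fst g $ fst p * fst g $ snd p / 2) / 2\<bar>)
      \<le> 4 * (real CARD('d))\<^sup>2 * sqrt (b + a\<^sup>2)"
    by simp
  moreover obtain xs where "word_prod xs = g" and "sum_list (map norm xs) \<le> norm (fst g)
      + (\<Sum>p\<in>UNIV. 4 * sqrt \<bar>(snd g $ fst p $ snd p - fst g $ fst p * fst g $ snd p / 2) / 2\<bar>)"
    using Gset_word_exists[OF assms(1)] by blast
  ultimately show ?thesis
    using ccnorm_le_word_length[of xs g] fst_norm by linarith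
qed

section \<open>The dyadic interpolation\<close>

lemma grid_cell_exists:
  assumes "0 < m" "t \<in> {0..1}"
  shows "\<exists>k<m. t \<in> {real k / m .. real (Suc k) / m}"
proof (cases "t < 1")
  case True
  define k where "k = nat \<lfloor>m * t\<rfloor>"
  have "0 \<le> m * t"
    using assms by simp
  then have k: "real k \<le> m * t" "m * t < real k + 1"
    unfolding k_def by linarith+
  have "m * t < m"
    using True assms(1) by simp
  then have "k < m"
    using k(1) by linarith
  then show ?thesis
    using k assms(1) by (auto simp: field_simps)
next
  case False
  then have "t = 1"
    using assms by simp
  then show ?thesis
    using assms(1) by (intro exI[of _ "m - 1"]) (simp add: of_nat_diff)
qed

definition dyadic :: "nat \<Rightarrow> nat \<Rightarrow> real" where
  "dyadic n k = real k / 2 ^ n"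

lemma dyadic_in_unit_interval:
  assumes "k \<le> 2 ^ n"
  shows "dyadic n k \<in> {0..1}"
proof -
  have "real k \<le> 2 ^ n"
    using assms by (metis of_nat_le_iff of_nat_numeral of_nat_power)
  then show ?thesis
    by (simp add: dyadic_def)
qed

lemma gmul_incr: "gmul (x s) (incr x s t) = x t"
  unfolding incr_def by (rule gmul_ginv_cancel_left)

lemma Ups_on_dyadic_cell:
  assumes k: "k < 2 ^ n" and t: "t \<in> {dyadic n k .. dyadic n (Suc k)}"
  shows "Ups n x t = gmul (x (dyadic n k)) (dil (2 ^ n * t - k) (incr x (dyadic n k) (dyadic n (Suc k))))"
proof -
  define N :: real where "N = 2 ^ n"
  have dyadic_eq: "dyadic n k = real k / N" "dyadic n (Suc k) = (real k + 1) / N"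
    unfolding dyadic_def N_def by (simp_all only: of_nat_Suc add.commute)
  have N0: "0 < N"
    unfolding N_def by simp
  have kN: "real k + 1 \<le> N"
    using k unfolding N_def by (metis Suc_leI of_nat_Suc of_nat_le_iff of_nat_numeral of_nat_power add.commute)
  have tN: "real k \<le> N * t" "N * t \<le> real k + 1"
    using t N0 unfolding dyadic_eq by (auto simp: field_simps)
  have "Ups n x t = gmul (x (real k / N)) (dil (N * t - real k) (incr x (real k / N) ((real k + 1) / N)))"
  proof (cases "1 \<le> t")
    case True
    have "N * t \<le> N * 1"
      using tN(2) kN by linarith
    then have "t = 1"
      using N0 True by (simp only: mult_le_cancel_left_pos)
    then have "real k + 1 = N"
      using tN(2) kN by simp
    then have "(real k + 1) / N = 1" "N * t - real k = 1"
      using N0 \<open>t = 1\<close> by simp_all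
    then show ?thesis
      using True by (simp add: Ups_def gmul_incr)
  next
    case False
    show ?thesis
    proof (cases "N * t < real k + 1")
      case True
      have "\<lfloor>N * t\<rfloor> = int k"
        using tN True by (simp add: floor_eq_iff)
      then show ?thesis
        using False unfolding Ups_def N_def[symmetric] by (simp add: Let_def)
    next
      case right_end: False
      then have Nt: "N * t = real k + 1"
        using tN by simp
      then have "\<lfloor>N * t\<rfloor> = int (k + 1)"
        by simp
      then have "Ups n x t = gmul (x ((real k + 1) / N)) (dil 0 (incr x ((real k + 1) / N) ((real k + 2) / N)))"
        using False Nt unfolding Ups_def N_def[symmetric] by (simp add: Let_def add.commute)
      also have "\<dots> = gmul (x (real k / N)) (dil (N * t - real k) (incr x (real k / N) ((real k + 1) / N)))"
        using Nt by (simp add: gmul_incr)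
      finally show ?thesis .
    qed
  qed
  then show ?thesis
    unfolding dyadic_eq N_def .
qed

lemma Ups_Gset:
  assumes "x \<in> C0paths" "t \<in> {0..1}"
  shows "Ups n x t \<in> Gset"
proof -
  obtain k where k: "k < 2 ^ n" "t \<in> {real k / real (2 ^ n) .. real (Suc k) / real (2 ^ n)}"
    using grid_cell_exists[of "2 ^ n" t] assms(2) by auto
  then have t: "t \<in> {dyadic n k .. dyadic n (Suc k)}"
    by (simp add: dyadic_def)
  have "x r \<in> Gset" if "r \<in> {0..1}" for r
    using assms(1) that unfolding C0paths_def by auto
  moreover have "dyadic n k \<in> {0..1}" "dyadic n (Suc k) \<in> {0..1}"
    using k(1) by (intro dyadic_in_unit_interval; simp)+
  ultimately show ?thesis
    unfolding Ups_on_dyadic_cell[OF k(1) t] incr_def by (intro Gset_gmul Gset_dil Gset_ginv) auto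
qed

lemma Ups_at_zero: "x 0 = gone \<Longrightarrow> Ups n x 0 = gone"
  by (simp add: Ups_def)

lemma Ups_gone: "Ups n (\<lambda>_. gone) t = gone"
  by (simp add: Ups_def Let_def incr_def dil_def gone_def gmul_def ginv_def)

lemma Ups_coords:
  assumes "k < 2 ^ n" and "t \<in> {dyadic n k .. dyadic n (Suc k)}"
  defines "\<tau> \<equiv> 2 ^ n * t - real k"
  shows "fst (Ups n x t) $ i = fst (x (dyadic n k)) $ i
           + \<tau> * (fst (x (dyadic n (Suc k))) $ i - fst (x (dyadic n k)) $ i)"
    and "snd (Ups n x t) $ i $ j = snd (x (dyadic n k)) $ i $ j
           + \<tau> * (fst (x (dyadic n k)) $ i * (fst (x (dyadic n (Suc k))) $ j - fst (x (dyadic n k)) $ j))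
           + \<tau>\<^sup>2 * (snd (x (dyadic n (Suc k))) $ i $ j - snd (x (dyadic n k)) $ i $ j
               - fst (x (dyadic n k)) $ i * (fst (x (dyadic n (Suc k))) $ j - fst (x (dyadic n k)) $ j))"
  unfolding Ups_on_dyadic_cell[OF assms(1,2)] incr_def \<tau>_def by (simp_all add: algebra_simps)

lemma piecewise_quadratic_lipschitz:
  fixes f :: "real \<Rightarrow> real" and A B C :: "nat \<Rightarrow> real" and m :: nat and L :: real
  assumes "0 < m"
    and piece: "\<And>k (t::real). k < m \<Longrightarrow> t \<in> {real k / m .. real (Suc k) / m} \<Longrightarrow>
                  f t = A k + (m * t - k) * B k + (m * t - k)\<^sup>2 * C k"
    and coeffs: "\<And>k. k < m \<Longrightarrow> \<bar>B k\<bar> + 2 * \<bar>C k\<bar> \<le> L"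
  shows "(m * L)-lipschitz_on {0..1} f"
proof -
  have "0 \<le> L"
    using coeffs[OF \<open>0 < m\<close>] by linarith
  then have mL: "0 \<le> m * L"
    by simp
  have "(m * L)-lipschitz_on {real k / m .. real (Suc k) / m} f" if "k < m" for k
  proof (rule lipschitz_onI)
    fix s t
    assume s: "s \<in> {real k / m .. real (Suc k) / m}" and t: "t \<in> {real k / m .. real (Suc k) / m}"
    define u where "u = m * s - k"
    define v where "v = m * t - k"
    have uv: "u \<in> {0..1}" "v \<in> {0..1}"
      using s t \<open>0 < m\<close> unfolding u_def v_def by (auto simp: field_simps)
    have "f s - f t = (u - v) * (B k + (u + v) * C k)"
      using piece[OF that s] piece[OF that t] unfolding u_def[symmetric] v_def[symmetric]
      by (simp add: power2_eq_square algebra_simps)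
    then have "dist (f s) (f t) = \<bar>u - v\<bar> * \<bar>B k + (u + v) * C k\<bar>"
      by (simp add: dist_real_def abs_mult)
    also have "\<dots> \<le> \<bar>u - v\<bar> * L"
    proof (rule mult_left_mono)
      have "\<bar>(u + v) * C k\<bar> \<le> 2 * \<bar>C k\<bar>"
        using uv by (simp add: abs_mult mult_right_mono)
      then show "\<bar>B k + (u + v) * C k\<bar> \<le> L"
        using coeffs[OF that] by linarith
    qed simp
    also have "\<bar>u - v\<bar> = m * dist s t"
      unfolding u_def v_def dist_real_def by (simp add: abs_mult flip: right_diff_distrib)
    finally show "dist (f s) (f t) \<le> m * L * dist s t"
      by (simp add: mult_ac)
  qed (rule mL)
  moreover have "{0..1} \<subseteq> (\<Union>k\<in>{..<m}. {real k / m .. real (Suc k) / m})"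
    using grid_cell_exists[OF \<open>0 < m\<close>] by blast
  ultimately show ?thesis
    by (intro lipschitz_on_closed_Union[where I = "{..<m}"] mL) auto
qed

lemma Ups_fst_diff_lipschitz:
  fixes w z :: "real \<Rightarrow> 'd::finite grp" and L :: real
  assumes "\<And>k. k < 2 ^ n \<Longrightarrow> \<bar>(fst (w (dyadic n (Suc k))) $ i - fst (z (dyadic n (Suc k))) $ i)
                                 - (fst (w (dyadic n k)) $ i - fst (z (dyadic n k)) $ i)\<bar> \<le> L"
  shows "(2 ^ n * L)-lipschitz_on {0..1} (\<lambda>t. fst (Ups n w t) $ i - fst (Ups n z t) $ i)"
proof -
  have "(real (2 ^ n) * L)-lipschitz_on {0..1} (\<lambda>t. fst (Ups n w t) $ i - fst (Ups n z t) $ i)"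
  proof (rule piecewise_quadratic_lipschitz[where C = "\<lambda>_. 0"])
    fix k t
    assume k: "k < 2 ^ n" and "t \<in> {real k / real (2 ^ n) .. real (Suc k) / real (2 ^ n)}"
    then have t: "t \<in> {dyadic n k .. dyadic n (Suc k)}"
      by (simp add: dyadic_def)
    show "fst (Ups n w t) $ i - fst (Ups n z t) $ i
        = (fst (w (dyadic n k)) $ i - fst (z (dyadic n k)) $ i)
          + (real (2 ^ n) * t - real k) * ((fst (w (dyadic n (Suc k))) $ i - fst (z (dyadic n (Suc k))) $ i)
                                            - (fst (w (dyadic n k)) $ i - fst (z (dyadic n k)) $ i))
          + (real (2 ^ n) * t - real k)\<^sup>2 * 0"
      unfolding Ups_coords(1)[OF k t] by (simp add: algebra_simps)
  qed (use assms in auto)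
  then show ?thesis
    by simp
qed

lemma Ups_snd_diff_lipschitz:
  fixes w z :: "real \<Rightarrow> 'd::finite grp" and n :: nat and i j :: 'd and L :: real
  defines "B \<equiv> \<lambda>k. fst (w (dyadic n k)) $ i * (fst (w (dyadic n (Suc k))) $ j - fst (w (dyadic n k)) $ j)
                   - fst (z (dyadic n k)) $ i * (fst (z (dyadic n (Suc k))) $ j - fst (z (dyadic n k)) $ j)"
    and "A \<equiv> \<lambda>k. snd (w (dyadic n k)) $ i $ j - snd (z (dyadic n k)) $ i $ j"
  assumes "\<And>k. k < 2 ^ n \<Longrightarrow> \<bar>B k\<bar> + 2 * \<bar>A (Suc k) - A k - B k\<bar> \<le> L"
  shows "(2 ^ n * L)-lipschitz_on {0..1} (\<lambda>t. snd (Ups n w t) $ i $ j - snd (Ups n z t) $ i $ j)"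
proof -
  have "(real (2 ^ n) * L)-lipschitz_on {0..1} (\<lambda>t. snd (Ups n w t) $ i $ j - snd (Ups n z t) $ i $ j)"
  proof (rule piecewise_quadratic_lipschitz[where A = A and B = B and C = "\<lambda>k. A (Suc k) - A k - B k"])
    fix k t
    assume k: "k < 2 ^ n" and "t \<in> {real k / real (2 ^ n) .. real (Suc k) / real (2 ^ n)}"
    then have t: "t \<in> {dyadic n k .. dyadic n (Suc k)}"
      by (simp add: dyadic_def)
    show "snd (Ups n w t) $ i $ j - snd (Ups n z t) $ i $ j
        = A k + (real (2 ^ n) * t - real k) * B k + (real (2 ^ n) * t - real k)\<^sup>2 * (A (Suc k) - A k - B k)"
      unfolding Ups_coords(2)[OF k t] A_def B_def by (simp add: algebra_simps)
  qed (use assms in auto)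
  then show ?thesis
    by simp
qed

section \<open>Increments of interpolated paths\<close>

lemma snd_coeff_diff_bound:
  fixes M e xi xj xj' yi yj yj' X X' Y Y' :: real
  assumes "\<bar>xi\<bar> \<le> M" "\<bar>xj\<bar> \<le> M" "\<bar>xj'\<bar> \<le> M" "1 \<le> M" "e \<le> 1"
    and "\<bar>yi - xi\<bar> \<le> e" "\<bar>yj - xj\<bar> \<le> e" "\<bar>yj' - xj'\<bar> \<le> e" "\<bar>Y - X\<bar> \<le> e" "\<bar>Y' - X'\<bar> \<le> e"
  defines "B \<equiv> yi * (yj' - yj) - xi * (xj' - xj)"
  shows "\<bar>B\<bar> + 2 * \<bar>(Y' - X') - (Y - X) - B\<bar> \<le> 22 * M * e"
proof -
  have "0 \<le> e"
    using assms(6) by linarith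
  have "\<bar>yj' - yj\<bar> \<le> 4 * M"
    using assms by linarith
  then have "\<bar>(yi - xi) * (yj' - yj)\<bar> \<le> e * (4 * M)"
    unfolding abs_mult using assms \<open>0 \<le> e\<close> by (intro mult_mono) auto
  moreover have "\<bar>(yj' - xj') - (yj - xj)\<bar> \<le> 2 * e"
    using assms by linarith
  then have "\<bar>xi * ((yj' - xj') - (yj - xj))\<bar> \<le> M * (2 * e)"
    unfolding abs_mult using assms \<open>0 \<le> e\<close> by (intro mult_mono) auto
  moreover have "B = (yi - xi) * (yj' - yj) + xi * ((yj' - xj') - (yj - xj))"
    unfolding B_def by (simp add: algebra_simps)
  ultimately have "\<bar>B\<bar> \<le> 6 * M * e"
    unfolding abs_le_iff by (simp add: algebra_simps)
  moreover have "e \<le> M * e"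
    using assms(4) \<open>0 \<le> e\<close> by (simp add: mult_le_cancel_right1)
  ultimately have "\<bar>(Y' - X') - (Y - X) - B\<bar> \<le> 8 * M * e"
    using assms(9,10) unfolding abs_le_iff by linarith
  with \<open>\<bar>B\<bar> \<le> 6 * M * e\<close> have "\<bar>B\<bar> + 2 * \<bar>(Y' - X') - (Y - X) - B\<bar> \<le> 6 * M * e + 2 * (8 * M * e)"
    by (intro add_mono mult_left_mono) auto
  then show ?thesis
    by simp
qed

lemma Ups_lipschitz_of_dyadic_close:
  fixes x y :: "real \<Rightarrow> 'd::finite grp" and M e :: real
  assumes "1 \<le> M" and x_le: "\<And>k i. k \<le> 2 ^ n \<Longrightarrow> \<bar>fst (x (dyadic n k)) $ i\<bar> \<le> M"
    and "0 \<le> e" "e \<le> 1"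
    and close_fst: "\<And>k i. k \<le> 2 ^ n \<Longrightarrow> \<bar>fst (y (dyadic n k)) $ i - fst (x (dyadic n k)) $ i\<bar> \<le> e"
    and close_snd: "\<And>k i j. k \<le> 2 ^ n \<Longrightarrow> \<bar>snd (y (dyadic n k)) $ i $ j - snd (x (dyadic n k)) $ i $ j\<bar> \<le> e"
  defines "K \<equiv> 2 ^ n * (22 * M)"
  shows "K-lipschitz_on {0..1} (\<lambda>t. fst (Ups n x t) $ i)"
    and "(K * e)-lipschitz_on {0..1} (\<lambda>t. fst (Ups n y t) $ i - fst (Ups n x t) $ i)"
    and "(K * e)-lipschitz_on {0..1} (\<lambda>t. snd (Ups n y t) $ i $ j - snd (Ups n x t) $ i $ j)"
proof -
  have "2 * e \<le> 22 * M * e"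
    using mult_right_mono[of 2 "22 * M" e] \<open>1 \<le> M\<close> \<open>0 \<le> e\<close> by simp
  then have K_bounds: "2 ^ n * (2 * M) \<le> K" "2 ^ n * (2 * e) \<le> K * e" "2 ^ n * (22 * M * e) = K * e"
    unfolding K_def using \<open>1 \<le> M\<close> by simp_all
  \<comment> \<open>comparing \<open>x\<close> with the constant path \<open>gone\<close>, whose interpolation is \<open>gone\<close>\<close>
  have "(2 ^ n * (2 * M))-lipschitz_on {0..1} (\<lambda>t. fst (Ups n x t) $ i - fst (Ups n (\<lambda>_. gone) t) $ i)"
  proof (rule Ups_fst_diff_lipschitz)
    fix k :: nat
    assume "k < 2 ^ n"
    then have "\<bar>fst (x (dyadic n (Suc k))) $ i\<bar> \<le> M" "\<bar>fst (x (dyadic n k)) $ i\<bar> \<le> M"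
      by (auto intro: x_le)
    then show "\<bar>(fst (x (dyadic n (Suc k))) $ i - fst ((\<lambda>_. gone) (dyadic n (Suc k))) $ i)
        - (fst (x (dyadic n k)) $ i - fst ((\<lambda>_. gone) (dyadic n k)) $ i)\<bar> \<le> 2 * M"
      by (auto simp: abs_le_iff)
  qed
  then show "K-lipschitz_on {0..1} (\<lambda>t. fst (Ups n x t) $ i)"
    using K_bounds(1) by (auto simp: Ups_gone intro: lipschitz_on_le)
  have "(2 ^ n * (2 * e))-lipschitz_on {0..1} (\<lambda>t. fst (Ups n y t) $ i - fst (Ups n x t) $ i)"
  proof (rule Ups_fst_diff_lipschitz)
    fix k :: nat
    assume "k < 2 ^ n"
    then have "\<bar>fst (y (dyadic n (Suc k))) $ i - fst (x (dyadic n (Suc k))) $ i\<bar> \<le> e"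
        "\<bar>fst (y (dyadic n k)) $ i - fst (x (dyadic n k)) $ i\<bar> \<le> e"
      by (auto intro: close_fst)
    then show "\<bar>(fst (y (dyadic n (Suc k))) $ i - fst (x (dyadic n (Suc k))) $ i)
        - (fst (y (dyadic n k)) $ i - fst (x (dyadic n k)) $ i)\<bar> \<le> 2 * e"
      by (auto simp: abs_le_iff)
  qed
  then show "(K * e)-lipschitz_on {0..1} (\<lambda>t. fst (Ups n y t) $ i - fst (Ups n x t) $ i)"
    using K_bounds(2) by (rule lipschitz_on_le)
  have "(2 ^ n * (22 * M * e))-lipschitz_on {0..1} (\<lambda>t. snd (Ups n y t) $ i $ j - snd (Ups n x t) $ i $ j)"
    by (rule Ups_snd_diff_lipschitz, rule snd_coeff_diff_bound)
      (auto intro: x_le close_fst close_snd simp: \<open>1 \<le> M\<close> \<open>e \<le> 1\<close>)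
  then show "(K * e)-lipschitz_on {0..1} (\<lambda>t. snd (Ups n y t) $ i $ j - snd (Ups n x t) $ i $ j)"
    unfolding K_bounds(3) .
qed

lemma incr_diff_coords:
  fixes P Q :: "real \<Rightarrow> 'd::finite grp"
  defines "D \<equiv> \<lambda>i r. fst (Q r) $ i - fst (P r) $ i"
  shows "fst (gmul (ginv (incr P s t)) (incr Q s t)) $ i = D i t - D i s"
    and "snd (gmul (ginv (incr P s t)) (incr Q s t)) $ i $ j
       = ((snd (Q t) $ i $ j - snd (P t) $ i $ j) - (snd (Q s) $ i $ j - snd (P s) $ i $ j))
         - D i s * (D j t - D j s) - D i s * (fst (P t) $ j - fst (P s) $ j)
         - fst (P s) $ i * (D j t - D j s) - (fst (P t) $ i - fst (P s) $ i) * (D j t - D j s)"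
  unfolding D_def incr_def by (simp_all add: algebra_simps)

lemma incr_diff_coord_bounds:
  fixes P Q :: "real \<Rightarrow> 'd::finite grp" and K e s t :: real
  assumes "P 0 = gone" "Q 0 = gone"
    and lip_P: "\<And>i. K-lipschitz_on {0..1} (\<lambda>r. fst (P r) $ i)"
    and lip_fst: "\<And>i. (K * e)-lipschitz_on {0..1} (\<lambda>r. fst (Q r) $ i - fst (P r) $ i)"
    and lip_snd: "\<And>i j. (K * e)-lipschitz_on {0..1} (\<lambda>r. snd (Q r) $ i $ j - snd (P r) $ i $ j)"
    and "1 \<le> K" "e \<le> 1" "0 \<le> s" "s \<le> t" "t \<le> 1"
  shows "\<bar>fst (gmul (ginv (incr P s t)) (incr Q s t)) $ i\<bar> \<le> K * e * (t - s)"
    and "\<bar>snd (gmul (ginv (incr P s t)) (incr Q s t)) $ i $ j\<bar> \<le> 5 * K\<^sup>2 * e * (t - s)"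
proof -
  define h where "h = t - s"
  define D where "D i r = fst (Q r) $ i - fst (P r) $ i" for i r
  have st: "s \<in> {0..1}" "t \<in> {0..1}" "0 \<in> {0..1::real}"
    using assms by auto
  have h: "0 \<le> h" "h \<le> 1"
    using assms unfolding h_def by auto
  have "0 \<le> K * e"
    using lipschitz_on_nonneg[OF lip_fst] .
  then have e: "0 \<le> e"
    using \<open>1 \<le> K\<close> by (simp add: zero_le_mult_iff)
  have dD: "\<bar>D i t - D i s\<bar> \<le> K * e * h" for i
    using lipschitz_onD[OF lip_fst st(2,1)] unfolding D_def h_def dist_real_def using assms by simp
  have Ds: "\<bar>D i s\<bar> \<le> K * e" for i
  proof -
    have "\<bar>D i s - D i 0\<bar> \<le> K * e * \<bar>s - 0\<bar>"
      using lipschitz_onD[OF lip_fst st(1,3)] unfolding D_def dist_real_def .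
    also have "\<dots> \<le> K * e"
      using \<open>0 \<le> K * e\<close> st(1) by (simp add: mult_left_le)
    finally show ?thesis
      using assms(1,2) by (simp add: D_def)
  qed
  have dp: "\<bar>fst (P t) $ i - fst (P s) $ i\<bar> \<le> K * h" for i
    using lipschitz_onD[OF lip_P st(2,1)] unfolding h_def dist_real_def using assms by simp
  have ps: "\<bar>fst (P s) $ i\<bar> \<le> K" for i
  proof -
    have "\<bar>fst (P s) $ i - fst (P 0) $ i\<bar> \<le> K * \<bar>s - 0\<bar>"
      using lipschitz_onD[OF lip_P st(1,3)] unfolding dist_real_def .
    also have "\<dots> \<le> K"
      using \<open>1 \<le> K\<close> st(1) by (simp add: mult_left_le)
    finally show ?thesis
      using assms(1) by simp
  qed
  have dG: "\<bar>(snd (Q t) $ i $ j - snd (P t) $ i $ j) - (snd (Q s) $ i $ j - snd (P s) $ i $ j)\<bar> \<le> K * e * h"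
    using lipschitz_onD[OF lip_snd st(2,1)] unfolding h_def dist_real_def using assms by simp
  show "\<bar>fst (gmul (ginv (incr P s t)) (incr Q s t)) $ i\<bar> \<le> K * e * (t - s)"
    using dD unfolding incr_diff_coords(1) D_def h_def .
  have Keh: "0 \<le> K * e * h"
    using \<open>0 \<le> K * e\<close> h by simp
  have "K * e * h \<le> K * e * h * K"
    using mult_left_mono[OF \<open>1 \<le> K\<close> Keh] by simp
  with dG have T1: "\<bar>(snd (Q t) $ i $ j - snd (P t) $ i $ j) - (snd (Q s) $ i $ j - snd (P s) $ i $ j)\<bar> \<le> K\<^sup>2 * e * h"
    by (simp add: power2_eq_square mult_ac)
  have "\<bar>D i s * (D j t - D j s)\<bar> \<le> (K * e) * (K * e * h)"
    unfolding abs_mult using Ds dD \<open>0 \<le> K * e\<close> by (intro mult_mono) auto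
  also have "\<dots> = (K\<^sup>2 * e * h) * e"
    by (simp add: power2_eq_square mult_ac)
  also have "\<dots> \<le> K\<^sup>2 * e * h"
    using e h \<open>e \<le> 1\<close> by (intro mult_left_le) auto
  finally have T2: "\<bar>D i s * (D j t - D j s)\<bar> \<le> K\<^sup>2 * e * h" .
  have "\<bar>D i s * (fst (P t) $ j - fst (P s) $ j)\<bar> \<le> (K * e) * (K * h)"
    unfolding abs_mult using Ds dp \<open>0 \<le> K * e\<close> by (intro mult_mono) auto
  then have T3: "\<bar>D i s * (fst (P t) $ j - fst (P s) $ j)\<bar> \<le> K\<^sup>2 * e * h"
    by (simp add: power2_eq_square mult_ac)
  have "\<bar>fst (P s) $ i * (D j t - D j s)\<bar> \<le> K * (K * e * h)"
    unfolding abs_mult using ps dD \<open>1 \<le> K\<close> by (intro mult_mono) auto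
  then have T4: "\<bar>fst (P s) $ i * (D j t - D j s)\<bar> \<le> K\<^sup>2 * e * h"
    by (simp add: power2_eq_square mult_ac)
  have "\<bar>(fst (P t) $ i - fst (P s) $ i) * (D j t - D j s)\<bar> \<le> (K * h) * (K * e * h)"
    unfolding abs_mult using dp dD \<open>1 \<le> K\<close> h by (intro mult_mono) auto
  also have "\<dots> = (K\<^sup>2 * e * h) * h"
    by (simp add: power2_eq_square mult_ac)
  also have "\<dots> \<le> K\<^sup>2 * e * h"
    using e h by (intro mult_left_le) auto
  finally have T5: "\<bar>(fst (P t) $ i - fst (P s) $ i) * (D j t - D j s)\<bar> \<le> K\<^sup>2 * e * h" .
  show "\<bar>snd (gmul (ginv (incr P s t)) (incr Q s t)) $ i $ j\<bar> \<le> 5 * K\<^sup>2 * e * (t - s)"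
    unfolding incr_diff_coords(2) D_def[symmetric] h_def[symmetric]
    using T1 T2 T3 T4 T5 unfolding abs_le_iff by linarith
qed

lemma ccnorm_Ups_incr_diff_le:
  fixes x y :: "real \<Rightarrow> 'd::finite grp" and M e s t :: real
  assumes "x \<in> C0paths" "y \<in> C0paths"
    and "1 \<le> M" "\<And>k i. k \<le> 2 ^ n \<Longrightarrow> \<bar>fst (x (dyadic n k)) $ i\<bar> \<le> M"
    and "0 \<le> e" "e \<le> 1"
    and "\<And>k i. k \<le> 2 ^ n \<Longrightarrow> \<bar>fst (y (dyadic n k)) $ i - fst (x (dyadic n k)) $ i\<bar> \<le> e"
    and "\<And>k i j. k \<le> 2 ^ n \<Longrightarrow> \<bar>snd (y (dyadic n k)) $ i $ j - snd (x (dyadic n k)) $ i $ j\<bar> \<le> e"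
    and "0 \<le> s" "s \<le> t" "t \<le> 1"
  shows "ccnorm (gmul (ginv (incr (Ups n x) s t)) (incr (Ups n y) s t))
           \<le> 13 * (real CARD('d))\<^sup>2 * (2 ^ n * (22 * M)) * sqrt (e * (t - s))"
proof -
  define K where "K = 2 ^ n * (22 * M)"
  define q where "q = e * (t - s)"
  define d where "d = real CARD('d)"
  define Z where "Z = gmul (ginv (incr (Ups n x) s t)) (incr (Ups n y) s t)"
  have "1 * 1 \<le> (2::real) ^ n * (22 * M)"
    using \<open>1 \<le> M\<close> by (intro mult_mono) auto
  then have "1 \<le> K"
    unfolding K_def by simp
  have q: "0 \<le> q" "q \<le> 1"
    unfolding q_def using assms by (auto intro: mult_le_one)
  have "x 0 = gone" "y 0 = gone"
    using assms(1,2) unfolding C0paths_def by auto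
  note lip = Ups_lipschitz_of_dyadic_close[where x = x and y = y and n = n, OF assms(3-8), folded K_def]
  note Z_bounds = incr_diff_coord_bounds[where P = "Ups n x" and Q = "Ups n y", OF Ups_at_zero[where x = x, OF \<open>x 0 = gone\<close>] Ups_at_zero[where x = y, OF \<open>y 0 = gone\<close>]
      lip \<open>1 \<le> K\<close> \<open>e \<le> 1\<close> assms(9-11), folded Z_def, unfolded mult.assoc[of _ e] q_def[symmetric]]
  have "Z \<in> Gset"
    unfolding Z_def incr_def using assms by (intro Gset_gmul Gset_ginv Ups_Gset) auto
  then have "ccnorm Z \<le> d * (K * q) + 4 * d\<^sup>2 * sqrt (5 * K\<^sup>2 * q + (K * q)\<^sup>2)"
    unfolding d_def using Z_bounds by (intro ccnorm_le_of_coord_bounds) (auto simp: mult.assoc)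
  also have "\<dots> \<le> d\<^sup>2 * (K * sqrt q) + 4 * d\<^sup>2 * (3 * K * sqrt q)"
  proof (rule add_mono)
    have "q = sqrt q * sqrt q"
      using q by simp
    also have "\<dots> \<le> sqrt q"
      using q by (intro mult_left_le) auto
    finally have "K * q \<le> K * sqrt q"
      using \<open>1 \<le> K\<close> by (intro mult_left_mono) auto
    moreover have "d \<le> d\<^sup>2"
      unfolding d_def by (simp add: power2_eq_square)
    ultimately show "d * (K * q) \<le> d\<^sup>2 * (K * sqrt q)"
      using q \<open>1 \<le> K\<close> by (intro mult_mono) auto
  next
    have "(K * q)\<^sup>2 = (K\<^sup>2 * q) * q"
      by (simp add: power2_eq_square)
    also have "\<dots> \<le> K\<^sup>2 * q"
      using q by (intro mult_left_le) auto
    finally have "(K * q)\<^sup>2 \<le> K\<^sup>2 * q" .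
    moreover have "0 \<le> K\<^sup>2 * q"
      using q by simp
    moreover have "(3 * K)\<^sup>2 * q = 9 * (K\<^sup>2 * q)" "5 * K\<^sup>2 * q = 5 * (K\<^sup>2 * q)"
      by (simp_all add: power_mult_distrib)
    ultimately have "5 * K\<^sup>2 * q + (K * q)\<^sup>2 \<le> (3 * K)\<^sup>2 * q"
      by linarith
    then have "sqrt (5 * K\<^sup>2 * q + (K * q)\<^sup>2) \<le> sqrt ((3 * K)\<^sup>2 * q)"
      by (rule real_sqrt_le_mono)
    also have "\<dots> = 3 * K * sqrt q"
      using \<open>1 \<le> K\<close> by (simp add: real_sqrt_mult)
    finally show "4 * d\<^sup>2 * sqrt (5 * K\<^sup>2 * q + (K * q)\<^sup>2) \<le> 4 * d\<^sup>2 * (3 * K * sqrt q)"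
      by (intro mult_left_mono) auto
  qed
  also have "\<dots> = 13 * d\<^sup>2 * K * sqrt q"
    by (simp add: algebra_simps)
  finally show ?thesis
    unfolding Z_def d_def K_def q_def .
qed

section \<open>Continuity of the interpolation\<close>

lemma Xi_pos:
  assumes "\<phi> \<in> Xi p" "0 < h" "h \<le> 1"
  shows "0 < \<phi> h"
proof -
  have "\<phi> 0 powr p < \<phi> h powr p" and "\<phi> 0 = 0" and "0 \<le> \<phi> h"
    using assms strict_mono_onD[of "{0..1}" "\<lambda>x. \<phi> x powr p" 0 h] unfolding Xi_def by auto
  then show ?thesis
    by (cases "\<phi> h = 0") auto
qed

lemma Xi_mono:
  assumes "\<phi> \<in> Xi p" "0 < p" "0 \<le> a" "a \<le> b" "b \<le> 1"
  shows "\<phi> a \<le> \<phi> b"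
proof (rule ccontr)
  assume "\<not> \<phi> a \<le> \<phi> b"
  moreover have "0 \<le> \<phi> b"
    using assms unfolding Xi_def by auto
  ultimately have "\<phi> b powr p \<le> \<phi> a powr p"
    using \<open>0 < p\<close> by (intro powr_mono2) auto
  moreover have "a < b"
    using \<open>\<not> \<phi> a \<le> \<phi> b\<close> \<open>a \<le> b\<close> by (cases "a = b") auto
  then have "\<phi> a powr p < \<phi> b powr p"
    using assms strict_mono_onD[of "{0..1}" "\<lambda>x. \<phi> x powr p" a b] unfolding Xi_def by auto
  ultimately show False
    by simp
qed

lemma Xi_ge_sqrt:
  assumes "\<phi> \<in> Xi p" "0 < p" "((\<lambda>x. sqrt x / \<phi> x) \<longlongrightarrow> 0) (at_right 0)"
  obtains c where "0 < c" "\<And>h. 0 < h \<Longrightarrow> h \<le> 1 \<Longrightarrow> c * sqrt h \<le> \<phi> h"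
proof -
  have "\<forall>\<^sub>F x in at_right 0. dist (sqrt x / \<phi> x) 0 < 1"
    using assms(3) tendstoD zero_less_one by blast
  then obtain h0 where h0: "0 < h0" "\<And>h. 0 < h \<Longrightarrow> h < h0 \<Longrightarrow> \<bar>sqrt h / \<phi> h\<bar> < 1"
    unfolding eventually_at_right_field by auto
  define h1 where "h1 = min (h0 / 2) 1"
  have h1: "0 < h1" "h1 < h0" "h1 \<le> 1"
    unfolding h1_def using h0 by auto
  define c where "c = min 1 (\<phi> h1)"
  have "0 < c"
    unfolding c_def using Xi_pos[OF assms(1) h1(1,3)] by simp
  moreover have "c * sqrt h \<le> \<phi> h" if h: "0 < h" "h \<le> 1" for h
  proof (cases "h < h0")
    case True
    have "0 < \<phi> h"
      using Xi_pos[OF assms(1) h] .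
    then have "sqrt h < \<phi> h"
      using h0(2)[OF h(1) True] by (simp add: divide_less_eq)
    moreover have "c * sqrt h \<le> sqrt h"
      using h \<open>0 < c\<close> by (intro mult_left_le_one_le) (auto simp: c_def)
    ultimately show ?thesis
      by simp
  next
    case False
    have "c * sqrt h \<le> c"
      using \<open>0 < c\<close> h by (simp add: mult_le_cancel_left1)
    also have "\<dots> \<le> \<phi> h1"
      unfolding c_def by simp
    also have "\<dots> \<le> \<phi> h"
      using Xi_mono[OF assms(1,2), of h1 h] h1 h False by auto
    finally show ?thesis .
  qed
  ultimately show ?thesis
    using that by blast
qed

lemma d_inf_coord_close:
  fixes x y :: "real \<Rightarrow> 'd::finite grp"
  assumes "x \<in> C0paths" "y \<in> C0paths" "t \<in> {0..1}"
    and "d_inf x y < ereal \<delta>" "0 \<le> \<delta>" "\<delta> \<le> 1"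
  shows "\<bar>fst (y t) $ i - fst (x t) $ i\<bar> \<le> \<delta>"
    and "\<bar>snd (y t) $ i $ j - snd (x t) $ i $ j\<bar> \<le> (\<bar>fst (x t) $ i\<bar> + 1) * \<delta>"
proof -
  have x: "x 0 = gone" "\<And>r. r \<in> {0..1} \<Longrightarrow> x r \<in> Gset"
    and y: "y 0 = gone" "\<And>r. r \<in> {0..1} \<Longrightarrow> y r \<in> Gset"
    using assms(1,2) unfolding C0paths_def by auto
  define g where "g = gmul (ginv (x t)) (y t)"
  have "ccnorm g \<le> \<delta>"
  proof (cases "t = 0")
    case True
    have "g = gone"
      unfolding g_def True x(1) y(1) by simp
    moreover have "ccnorm gone \<le> 0"
      using ccnorm_le_word_length[of "[]" gone] by simp
    ultimately show ?thesis
      using \<open>0 \<le> \<delta>\<close> by (metis order_trans)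
  next
    case False
    then have "(0, t) \<in> {(s, t). 0 \<le> s \<and> s < t \<and> t \<le> 1}"
      using assms(3) by auto
    then have "ereal (ccnorm (gmul (ginv (incr x 0 t)) (incr y 0 t))) \<le> d_inf x y"
      unfolding d_inf_def by (rule SUP_upper2) simp
    then have "ereal (ccnorm (gmul (ginv (incr x 0 t)) (incr y 0 t))) < ereal \<delta>"
      using assms(4) by (rule order_le_less_trans)
    then show ?thesis
      unfolding g_def incr_def x(1) y(1) by simp
  qed
  have "g \<in> Gset"
    unfolding g_def using x y assms(3) by (intro Gset_gmul Gset_ginv) auto
  note g_bounds = ccnorm_coord_bounds[OF this]
  have "0 \<le> ccnorm g"
    using g_bounds(1) abs_ge_zero order_trans by blast
  show fst_close: "\<bar>fst (y t) $ i - fst (x t) $ i\<bar> \<le> \<delta>" for i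
    using g_bounds(1)[of i] \<open>ccnorm g \<le> \<delta>\<close> unfolding g_def by simp
  have "ccnorm g \<le> 1"
    using \<open>ccnorm g \<le> \<delta>\<close> \<open>\<delta> \<le> 1\<close> by linarith
  then have "(ccnorm g)\<^sup>2 \<le> \<delta>"
    using mult_left_le[of "ccnorm g" "ccnorm g"] \<open>0 \<le> ccnorm g\<close> \<open>ccnorm g \<le> \<delta>\<close>
    by (simp add: power2_eq_square)
  then have "\<bar>snd (y t) $ i $ j - snd (x t) $ i $ j - fst (x t) $ i * (fst (y t) $ j - fst (x t) $ j)\<bar> \<le> \<delta>"
    using g_bounds(2)[of i j] unfolding g_def by (simp add: algebra_simps)
  moreover have "\<bar>fst (x t) $ i * (fst (y t) $ j - fst (x t) $ j)\<bar> \<le> \<bar>fst (x t) $ i\<bar> * \<delta>"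
    unfolding abs_mult using fst_close[of j] by (intro mult_left_mono) auto
  ultimately show "\<bar>snd (y t) $ i $ j - snd (x t) $ i $ j\<bar> \<le> (\<bar>fst (x t) $ i\<bar> + 1) * \<delta>"
    unfolding abs_le_iff by (simp add: algebra_simps)
qed

lemma d_phi_le:
  fixes x y :: "real \<Rightarrow> 'd::finite grp" and \<phi> :: "real \<Rightarrow> real" and B :: real
  assumes "\<And>h. 0 < h \<Longrightarrow> h \<le> 1 \<Longrightarrow> 0 < \<phi> h"
    and "\<And>s t. 0 \<le> s \<Longrightarrow> s < t \<Longrightarrow> t \<le> 1 \<Longrightarrow>
           ccnorm (gmul (ginv (incr x s t)) (incr y s t)) \<le> B * \<phi> (t - s)"
  shows "d_phi \<phi> x y \<le> ereal B"
  unfolding d_phi_def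
proof (rule SUP_least)
  fix st :: "real \<times> real"
  assume "st \<in> {(s, t). 0 \<le> s \<and> s < t \<and> t \<le> 1}"
  then obtain s t where "st = (s, t)" "0 \<le> s" "s < t" "t \<le> 1"
    by auto
  with assms show "ereal (ccnorm (gmul (ginv (incr x (fst st) (snd st))) (incr y (fst st) (snd st)))
      / \<phi> (snd st - fst st)) \<le> ereal B"
    by (simp add: pos_divide_le_eq)
qed

lemma finite_coords_bounded:
  fixes v :: "nat \<Rightarrow> real^'d::finite"
  obtains M where "1 \<le> M" "\<And>k i. k \<le> N \<Longrightarrow> \<bar>v k $ i\<bar> \<le> M"
proof
  show "1 \<le> 1 + (\<Sum>k\<le>N. norm (v k))"
    by (simp add: sum_nonneg)
  fix k i
  assume "k \<le> N"
  have "\<bar>v k $ i\<bar> \<le> norm (v k)"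
    by (rule component_le_norm_cart)
  also have "\<dots> \<le> (\<Sum>k\<le>N. norm (v k))"
    using \<open>k \<le> N\<close> by (intro member_le_sum) auto
  finally show "\<bar>v k $ i\<bar> \<le> 1 + (\<Sum>k\<le>N. norm (v k))"
    by simp
qed

lemma d_phi_Ups_le:
  fixes x y :: "real \<Rightarrow> 'd::finite grp" and M e c :: real
  assumes "x \<in> C0paths" "y \<in> C0paths"
    and "1 \<le> M" and x_le: "\<And>k i. k \<le> 2 ^ n \<Longrightarrow> \<bar>fst (x (dyadic n k)) $ i\<bar> \<le> M"
    and "0 < e" "e \<le> 1" "d_inf x y < ereal (e / (M + 1))"
    and "0 < c" and \<phi>_ge: "\<And>h. 0 < h \<Longrightarrow> h \<le> 1 \<Longrightarrow> c * sqrt h \<le> \<phi> h"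
  defines "R \<equiv> 13 * (real CARD('d))\<^sup>2 * (2 ^ n * (22 * M))"
  shows "d_phi \<phi> (Ups n x) (Ups n y) \<le> ereal (R / c * sqrt e)"
proof (rule d_phi_le)
  show "0 < \<phi> h" if "0 < h" "h \<le> 1" for h
  proof -
    have "0 < c * sqrt h"
      using \<open>0 < c\<close> \<open>0 < h\<close> by simp
    then show ?thesis
      using \<phi>_ge[OF that] by linarith
  qed
next
  define \<delta> where "\<delta> = e / (M + 1)"
  have \<delta>: "0 \<le> \<delta>" "\<delta> \<le> e" "\<delta> \<le> 1" "(M + 1) * \<delta> = e"
    unfolding \<delta>_def using \<open>1 \<le> M\<close> \<open>0 < e\<close> \<open>e \<le> 1\<close> by (simp_all add: divide_le_eq)
  note d_inf_close = d_inf_coord_close[OF assms(1,2) dyadic_in_unit_interval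
      \<open>d_inf x y < ereal (e / (M + 1))\<close>[folded \<delta>_def] \<delta>(1,3)]
  have close_fst: "\<bar>fst (y (dyadic n k)) $ i - fst (x (dyadic n k)) $ i\<bar> \<le> e" if "k \<le> 2 ^ n" for k i
    using d_inf_close(1)[OF that, of i] \<delta>(2) by linarith
  have close_snd: "\<bar>snd (y (dyadic n k)) $ i $ j - snd (x (dyadic n k)) $ i $ j\<bar> \<le> e"
    if "k \<le> 2 ^ n" for k i j
  proof -
    have "(\<bar>fst (x (dyadic n k)) $ i\<bar> + 1) * \<delta> \<le> (M + 1) * \<delta>"
      using x_le[OF that] \<delta>(1) by (intro mult_right_mono) auto
    then show ?thesis
      using d_inf_close(2)[OF that, of i j] \<delta>(4) by linarith
  qed
  fix s t :: real
  assume st: "0 \<le> s" "s < t" "t \<le> 1"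
  have "0 \<le> R"
    unfolding R_def using \<open>1 \<le> M\<close> by simp
  have "ccnorm (gmul (ginv (incr (Ups n x) s t)) (incr (Ups n y) s t)) \<le> R * sqrt (e * (t - s))"
    unfolding R_def using st
    by (intro ccnorm_Ups_incr_diff_le[OF assms(1-4) _ assms(6) close_fst close_snd]) (use assms(5) in auto)
  also have "\<dots> = R / c * sqrt e * (c * sqrt (t - s))"
    using \<open>0 < c\<close> by (simp add: real_sqrt_mult)
  also have "\<dots> \<le> R / c * sqrt e * \<phi> (t - s)"
    using \<open>0 \<le> R\<close> \<open>0 < c\<close> \<open>0 < e\<close> st by (intro mult_left_mono \<phi>_ge) auto
  finally show "ccnorm (gmul (ginv (incr (Ups n x) s t)) (incr (Ups n y) s t)) \<le> R / c * sqrt e * \<phi> (t - s)" .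
qed

lemma exists_mult_sqrt_less:
  fixes a \<epsilon> :: real
  assumes "0 < a" "0 < \<epsilon>"
  shows "\<exists>e. 0 < e \<and> e \<le> 1 \<and> a * sqrt e < \<epsilon>"
proof -
  define e where "e = min 1 ((\<epsilon> / (2 * a))\<^sup>2)"
  have "sqrt e \<le> \<epsilon> / (2 * a)"
    unfolding e_def using assms by (simp add: real_le_lsqrt real_sqrt_le_iff')
  then have "a * sqrt e \<le> \<epsilon> / 2"
    using assms by (simp add: field_simps)
  moreover have "0 < e" "e \<le> 1"
    unfolding e_def using assms by auto
  ultimately show ?thesis
    using assms by (intro exI[of _ e]) auto
qed

theorem mainTheorem20:
  fixes \<phi> :: "real \<Rightarrow> real" and p :: real and n :: nat
  assumes "CARD('d::finite) \<ge> 2"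
    and "2 < p" and "p < 3"
    and "\<phi> \<in> Xi p"
    and "((\<lambda>x. sqrt x / \<phi> x) \<longlongrightarrow> 0) (at_right 0)"
  shows "\<forall>x\<in>(C0paths :: (real \<Rightarrow> 'd grp) set). \<forall>\<epsilon>>0. \<exists>\<delta>>0. \<forall>y\<in>C0paths.
           d_inf x y < ereal \<delta> \<longrightarrow> d_phi \<phi> (Ups n x) (Ups n y) < ereal \<epsilon>"
proof (intro ballI allI impI)
  fix x :: "real \<Rightarrow> 'd grp" and \<epsilon> :: real
  assume x: "x \<in> C0paths" and "0 < \<epsilon>"
  have "0 < p"
    using assms(2) by linarith
  obtain c where c: "0 < c" "\<And>h. 0 < h \<Longrightarrow> h \<le> 1 \<Longrightarrow> c * sqrt h \<le> \<phi> h"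
    using Xi_ge_sqrt[OF assms(4) \<open>0 < p\<close> assms(5)] by blast
  obtain M where M: "1 \<le> M" "\<And>k i. k \<le> 2 ^ n \<Longrightarrow> \<bar>fst (x (dyadic n k)) $ i\<bar> \<le> M"
    using finite_coords_bounded[of "2 ^ n" "\<lambda>k. fst (x (dyadic n k))"] by blast
  define R where "R = 13 * (real CARD('d))\<^sup>2 * (2 ^ n * (22 * M))"
  have "0 < R / c"
    unfolding R_def using M(1) c(1) by simp
  then obtain e where e: "0 < e" "e \<le> 1" "R / c * sqrt e < \<epsilon>"
    using exists_mult_sqrt_less \<open>0 < \<epsilon>\<close> by blast
  show "\<exists>\<delta>>0. \<forall>y\<in>C0paths. d_inf x y < ereal \<delta> \<longrightarrow> d_phi \<phi> (Ups n x) (Ups n y) < ereal \<epsilon>"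
  proof (intro exI[of _ "e / (M + 1)"] conjI ballI impI)
    show "0 < e / (M + 1)"
      using e M(1) by simp
    fix y :: "real \<Rightarrow> 'd grp"
    assume "y \<in> C0paths" "d_inf x y < ereal (e / (M + 1))"
    with x M e(1,2) c have "d_phi \<phi> (Ups n x) (Ups n y) \<le> ereal (R / c * sqrt e)"
      unfolding R_def by (intro d_phi_Ups_le)
    also have "\<dots> < ereal \<epsilon>"
      using e(3) by simp
    finally show "d_phi \<phi> (Ups n x) (Ups n y) < ereal \<epsilon>" .
  qed
qed

end
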